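(* Let $\mu$ be a probability measure on $\mathbb{C}$ with compact infinite support, with orthonormal polynomials $x_n(z;d\mu)$. Let $H$ be the convex hull of $\operatorname{supp}(\mu)$ and $D=\min_{w\in\mathbb{C}}\max_{z\in H}|z-w|$. For $z_0\in\mathbb{C}\setminus H$ let $d=\operatorname{dist}(z_0,H)$. Then for every $n\ge1$, $$|x_n(z_0;d\mu)|^2\ge\Bigl(\frac dD\Bigr)^2\Bigl(1+\Bigl(\frac dD\Bigr)^2\Bigr)^{n-1},$$ so $x_n(z_0)\ne0$ for all $n$ and $\liminf_{n\to\infty}|x_n(z_0;d\mu)|^{1/n}\ge(1+(d/D)^2)^{1/2}>1$.
   Context: $X_n$ denotes the monic polynomial of degree $n$ orthogonal in $L^2(\mathbb{C},\mu)$ to all polynomials of lower degree, and $x_n=X_n/\|X_n\|_{L^2(\mu)}$; $x_0=1$ since $\mu$ is a probability measure. *)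

theory Defs
  imports "HOL-Probability.Probability" "HOL-Computational_Algebra.Polynomial"
begin

definition msupp :: "complex measure \<Rightarrow> complex set" where
  "msupp M = {z. \<forall>e>0. emeasure M (ball z e) > 0}"

definition poly_ip :: "complex measure \<Rightarrow> complex poly \<Rightarrow> complex poly \<Rightarrow> complex" where
  "poly_ip M p q = integral\<^sup>L M (\<lambda>z. poly p z * cnj (poly q z))"

definition poly_L2norm :: "complex measure \<Rightarrow> complex poly \<Rightarrow> real" where
  "poly_L2norm M p = sqrt (integral\<^sup>L M (\<lambda>z. (cmod (poly p z))\<^sup>2))"

definition monic_OP :: "complex measure \<Rightarrow> nat \<Rightarrow> complex poly" where
  "monic_OP M n = (THE p. degree p = n \<and> lead_coeff p = 1 \<and>
                       (\<forall>q. degree q < n \<longrightarrow> poly_ip M p q = 0))"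

definition orthonormal_OP :: "complex measure \<Rightarrow> nat \<Rightarrow> complex \<Rightarrow> complex" where
  "orthonormal_OP M n z = poly (monic_OP M n) z / complex_of_real (poly_L2norm M (monic_OP M n))"

end

theory Submission
  imports Defs
begin

(* Write K_n(z0) = sum_{k<=n} |x_k(z0)|^2 for the Christoffel-Darboux kernel on the diagonal.
   It has the extremal property |p(z0)|^2 <= ||p||^2 K_n(z0) for deg p <= n, with equality for
   the reproducing kernel K_n(., z0).  Suppose a centre w satisfies
   (1 + r) |z - w|^2 <= |z0 - w|^2 on supp(mu).  Testing the extremal property (degree n + 1) on
   (z - w) K_n(z, z0) gives (1 + r) K_n(z0) <= K_{n+1}(z0).  Elementary plane geometry provides
   such a w with r = (d/R)^2 for every R > D: push the centre of a disc of radius R containing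
   the hull away from z0, along the normal at the point of the hull closest to z0.  Letting
   R -> D, the kernel grows at least like (1 + (d/D)^2)^n, and since |x_{n+1}(z0)|^2 is the
   increment K_{n+1}(z0) - K_n(z0) the bound follows; the liminf estimate is a corollary. *)

text \<open>With \<open>t = R\<^sup>2/\<delta>\<close>, the quadratics
  \<open>P + 2t\<beta> + t\<^sup>2\<delta>\<close> and \<open>Q + 2t\<alpha> + t\<^sup>2\<delta>\<close> are the squared distances of \<open>z\<close> and \<open>z\<^sub>0\<close> from the shifted
  centre; the hypotheses encode \<open>|z - c| \<le> R\<close>, the obtuse angle at the nearest point of the hull,
  and Cauchy--Schwarz.\<close>
lemma shift_bound_real:
  fixes P Q \<alpha> \<beta> \<delta> R :: real
  assumes "\<delta> > 0" "R > 0" "P \<le> R\<^sup>2" "\<beta> \<le> \<alpha> - \<delta>" "\<alpha>\<^sup>2 \<le> \<delta> * Q"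
  defines "t \<equiv> R\<^sup>2 / \<delta>"
  shows "(1 + \<delta> / R\<^sup>2) * (P + 2 * t * \<beta> + t\<^sup>2 * \<delta>) \<le> Q + 2 * t * \<alpha> + t\<^sup>2 * \<delta>"
proof -
  have t0: "t \<ge> 0" using assms(1,2) unfolding t_def by simp
  have "t * \<beta> \<le> t * (\<alpha> - \<delta>)" using assms(4) t0 by (rule mult_left_mono)
  then have "P + 2 * t * \<beta> + t\<^sup>2 * \<delta> \<le> R\<^sup>2 + 2 * t * (\<alpha> - \<delta>) + t\<^sup>2 * \<delta>"
    using assms(3) by linarith
  then have "(1 + \<delta> / R\<^sup>2) * (P + 2 * t * \<beta> + t\<^sup>2 * \<delta>)
      \<le> (1 + \<delta> / R\<^sup>2) * (R\<^sup>2 + 2 * t * (\<alpha> - \<delta>) + t\<^sup>2 * \<delta>)"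
    using assms(1,2) by (intro mult_left_mono) (auto intro: add_nonneg_nonneg)
  also have "\<dots> = \<alpha>\<^sup>2 / \<delta> + 2 * t * \<alpha> + t\<^sup>2 * \<delta> - (\<alpha> - \<delta>)\<^sup>2 / \<delta>"
    using assms(1,2) unfolding t_def by (simp add: field_simps power2_eq_square)
  also have "\<dots> \<le> Q + 2 * t * \<alpha> + t\<^sup>2 * \<delta>"
  proof -
    have "\<alpha>\<^sup>2 / \<delta> \<le> Q" using assms(1,5) by (simp add: pos_divide_le_eq mult.commute)
    moreover have "(\<alpha> - \<delta>)\<^sup>2 / \<delta> \<ge> 0" using assms(1) by simp
    ultimately show ?thesis by linarith
  qed
  finally show ?thesis .
qed

lemma shifted_centre_inequality:
  fixes z z0 c w0 :: "'a::real_inner" and R :: real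
  assumes R: "R > 0" and v0: "z0 \<noteq> w0" and zc: "norm (z - c) \<le> R"
    and obtuse: "inner (z0 - w0) (z - w0) \<le> 0"
  defines "w \<equiv> c - (R\<^sup>2 / (norm (z0 - w0))\<^sup>2) *\<^sub>R (z0 - w0)"
  shows "(1 + (norm (z0 - w0) / R)\<^sup>2) * (norm (z - w))\<^sup>2 \<le> (norm (z0 - w))\<^sup>2"
proof -
  define v p q where "v = z0 - w0" and "p = z - c" and "q = z0 - c"
  define \<delta> t where "\<delta> = (norm v)\<^sup>2" and "t = R\<^sup>2 / \<delta>"
  have \<delta>: "\<delta> > 0" using v0 unfolding \<delta>_def v_def by simp
  have sq: "(norm (a + t *\<^sub>R v))\<^sup>2 = (norm a)\<^sup>2 + 2 * t * inner v a + t\<^sup>2 * \<delta>" for a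
    unfolding \<delta>_def power2_norm_eq_inner
    by (simp add: inner_add inner_commute[of a v] algebra_simps power2_eq_square)
  have "(norm p)\<^sup>2 \<le> R\<^sup>2" using zc unfolding p_def by (intro power_mono) auto
  moreover have "inner v p \<le> inner v q - \<delta>"
  proof -
    have "z - w0 = p - q + v" unfolding p_def q_def v_def by simp
    then show ?thesis using obtuse unfolding v_def \<delta>_def
      by (simp add: inner_diff_right inner_add_right power2_norm_eq_inner)
  qed
  moreover have "(inner v q)\<^sup>2 \<le> \<delta> * (norm q)\<^sup>2"
    using Cauchy_Schwarz_ineq[of v q] unfolding \<delta>_def power2_norm_eq_inner .
  ultimately have "(1 + \<delta> / R\<^sup>2) * ((norm p)\<^sup>2 + 2 * t * inner v p + t\<^sup>2 * \<delta>)
      \<le> (norm q)\<^sup>2 + 2 * t * inner v q + t\<^sup>2 * \<delta>"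
    unfolding t_def by (rule shift_bound_real[OF \<delta> R])
  moreover have "z - w = p + t *\<^sub>R v" "z0 - w = q + t *\<^sub>R v"
    unfolding w_def p_def q_def v_def t_def \<delta>_def by (simp_all add: algebra_simps)
  moreover have "(norm (z0 - w0) / R)\<^sup>2 = \<delta> / R\<^sup>2"
    unfolding \<delta>_def v_def by (simp add: power_divide)
  ultimately show ?thesis by (simp only: sq)
qed

lemma bdd_above_dist_image:
  fixes H :: "'a::real_normed_vector set"
  assumes "bounded H"
  shows "bdd_above ((\<lambda>z. norm (z - w)) ` H)"
proof -
  obtain B where "\<forall>z\<in>H. norm z \<le> B" using assms bounded_iff by blast
  then have "\<forall>z\<in>H. norm (z - w) \<le> B + norm w"
    by (metis add_right_mono norm_triangle_ineq4 order_trans)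
  then show ?thesis by (intro bdd_aboveI2) blast
qed

lemma chebyshev_radius_pos:
  fixes H :: "'a::real_normed_vector set"
  assumes "bounded H" "a \<in> H" "b \<in> H" "a \<noteq> b"
  shows "(INF w. SUP z\<in>H. norm (z - w)) > 0"
proof -
  have "norm (a - b) / 2 \<le> (INF w. SUP z\<in>H. norm (z - w))"
  proof (rule cINF_greatest)
    fix w
    have "norm (a - w) \<le> (SUP z\<in>H. norm (z - w))" "norm (b - w) \<le> (SUP z\<in>H. norm (z - w))"
      using assms by (auto intro!: cSUP_upper bdd_above_dist_image)
    moreover have "norm (a - b) \<le> norm (a - w) + norm (b - w)"
      using norm_triangle_ineq4[of "a - w" "b - w"] by simp
    ultimately show "norm (a - b) / 2 \<le> (SUP z\<in>H. norm (z - w))" by linarith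
  qed simp
  moreover have "norm (a - b) > 0" using assms(4) by simp
  ultimately show ?thesis by linarith
qed

lemma exists_shifted_centre:
  fixes H :: "'a::euclidean_space set"
  assumes H: "compact H" "convex H" and z0: "z0 \<notin> H"
    and R: "(INF w. SUP z\<in>H. norm (z - w)) < R"
  shows "\<exists>w. \<forall>z\<in>H. (1 + (infdist z0 H / R)\<^sup>2) * (norm (z - w))\<^sup>2 \<le> (norm (z0 - w))\<^sup>2"
proof (cases "H = {}")
  case False
  obtain c where c: "(SUP z\<in>H. norm (z - c)) < R"
    using cInf_lessD[of "range (\<lambda>w. SUP z\<in>H. norm (z - w))" R] R by auto
  have zc: "norm (z - c) < R" if "z \<in> H" for z
    using cSUP_upper[OF that bdd_above_dist_image[OF compact_imp_bounded[OF H(1)], where w = c]] c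
    by simp
  obtain a where "a \<in> H" using False by blast
  then have R0: "R > 0" using zc[of a] norm_ge_zero[of "a - c"] by linarith
  define w0 where "w0 = closest_point H z0"
  have w0: "w0 \<in> H" unfolding w0_def
    using closest_point_in_set[OF compact_imp_closed[OF H(1)] False] .
  have z0w0: "z0 \<noteq> w0" using w0 z0 by auto
  have d: "infdist z0 H \<le> norm (z0 - w0)" using infdist_le[OF w0] by (simp add: dist_norm)
  define w where "w = c - (R\<^sup>2 / (norm (z0 - w0))\<^sup>2) *\<^sub>R (z0 - w0)"
  have "(1 + (infdist z0 H / R)\<^sup>2) * (norm (z - w))\<^sup>2 \<le> (norm (z0 - w))\<^sup>2" if z: "z \<in> H" for z
  proof -
    have "(infdist z0 H / R)\<^sup>2 \<le> (norm (z0 - w0) / R)\<^sup>2"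
      using d R0 by (intro power_mono divide_right_mono) (auto simp: infdist_nonneg)
    then have "(1 + (infdist z0 H / R)\<^sup>2) * (norm (z - w))\<^sup>2
        \<le> (1 + (norm (z0 - w0) / R)\<^sup>2) * (norm (z - w))\<^sup>2" by (intro mult_right_mono) auto
    also have "\<dots> \<le> (norm (z0 - w))\<^sup>2" unfolding w_def
      using R0 z0w0 less_imp_le[OF zc[OF z]] closest_point_dot[OF H(2) compact_imp_closed[OF H(1)] z, of z0]
      unfolding w0_def by (intro shifted_centre_inequality)
    finally show ?thesis .
  qed
  then show ?thesis by blast
qed simp

lemma liminf_root_ge:
  fixes f :: "nat \<Rightarrow> real" and a b :: real
  assumes a: "a > 0" and b: "b > 0" and f: "\<And>n. f n \<ge> 0"
    and bound: "\<And>n. n \<ge> 1 \<Longrightarrow> a * b ^ (n - 1) \<le> (f n)\<^sup>2"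
  shows "liminf (\<lambda>n. ereal (f n powr (1 / real n))) \<ge> ereal (sqrt b)"
proof -
  define g where "g n = sqrt a powr (1 / real n) * sqrt b powr (1 - 1 / real n)" for n
  have "g \<longlonglongrightarrow> sqrt a powr 0 * sqrt b powr (1 - 0)"
    unfolding g_def using a b by (intro tendsto_intros lim_inverse_n') auto
  then have lim: "g \<longlonglongrightarrow> sqrt b" using a b by simp
  have "ereal (g n) \<le> ereal (f n powr (1 / real n))" if n: "n \<ge> 1" for n
  proof -
    have "sqrt a * sqrt b ^ (n - 1) = sqrt (a * b ^ (n - 1))"
      by (simp add: real_sqrt_mult real_sqrt_power)
    also have "\<dots> \<le> f n" using bound[OF n] f[of n] real_le_lsqrt by blast
    finally have "(sqrt a * sqrt b ^ (n - 1)) powr (1 / real n) \<le> f n powr (1 / real n)"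
      using a b by (intro powr_mono2) auto
    moreover have "(sqrt a * sqrt b ^ (n - 1)) powr (1 / real n) = g n"
    proof -
      have "(sqrt b ^ (n - 1)) powr (1 / real n) = sqrt b powr (real (n - 1) * (1 / real n))"
        using b by (simp add: powr_realpow[symmetric] powr_powr)
      also have "real (n - 1) * (1 / real n) = 1 - 1 / real n"
        using n by (simp add: of_nat_diff field_simps)
      finally show ?thesis unfolding g_def using a b by (simp add: powr_mult)
    qed
    ultimately show ?thesis by simp
  qed
  then have "eventually (\<lambda>n. ereal (g n) \<le> ereal (f n powr (1 / real n))) sequentially"
    unfolding eventually_sequentially by blast
  moreover have "ereal (sqrt b) = liminf (\<lambda>n. ereal (g n))"
    using lim by (intro lim_imp_Liminf[symmetric]) auto
  ultimately show ?thesis by (metis Liminf_mono)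
qed

locale compact_support_measure =
  fixes M :: "complex measure"
  assumes prob: "prob_space M" and sets_M: "sets M = sets borel"
    and compact_supp: "compact (msupp M)" and infinite_supp: "infinite (msupp M)"
begin

interpretation prob_space M by (rule prob)

lemma space_M: "space M = UNIV"
  using sets_eq_imp_space_eq[OF sets_M] by simp

lemma not_in_msupp_iff: "x \<notin> msupp M \<longleftrightarrow> (\<exists>e>0. emeasure M (ball x e) = 0)"
  unfolding msupp_def by (auto simp: not_gr_zero)

text \<open>Outside the support every point has a null neighbourhood; by Lindelof countably many of
  these balls already cover the complement, so the support carries the full measure.\<close>
lemma AE_in_msupp: "AE z in M. z \<in> msupp M"
proof -
  let ?F = "{ball z e | z e. e > 0 \<and> emeasure M (ball z e) = 0}"
  obtain F where F: "F \<subseteq> ?F" "countable F" "\<Union>F = \<Union>?F"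
    using Lindelof[of ?F] by auto
  have "\<Union>?F = - msupp M"
  proof (intro equalityI subsetI)
    fix x assume "x \<in> \<Union>?F"
    then obtain z e where ze: "e > 0" "emeasure M (ball z e) = 0" "x \<in> ball z e" by auto
    have "ball x (e - dist z x) \<subseteq> ball z e"
      by (auto simp: ball_def) (metis dist_triangle add.commute less_diff_eq order_le_less_trans)
    then have "emeasure M (ball x (e - dist z x)) \<le> emeasure M (ball z e)"
      by (rule emeasure_mono) (simp add: sets_M)
    moreover have "e - dist z x > 0" using ze(3) by simp
    ultimately show "x \<in> - msupp M" using ze(2) not_in_msupp_iff[of x] by auto
  next
    fix x assume "x \<in> - msupp M"
    then obtain e where "e > 0" "emeasure M (ball x e) = 0" using not_in_msupp_iff by blast
    then show "x \<in> \<Union>?F" by (intro UnionI[of "ball x e"]) auto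
  qed
  moreover have "(\<Union>B\<in>F. B) \<in> null_sets M"
    using F(1,2) by (intro null_sets_UN') (auto simp: null_sets_def sets_M)
  ultimately show ?thesis using F(3) AE_not_in[of "\<Union>B\<in>F. B" M] by auto
qed

text \<open>Continuous functions are bounded on the compact support, hence integrable.\<close>
lemma integrable_continuous:
  fixes f :: "complex \<Rightarrow> 'b::{banach,second_countable_topology}"
  assumes "continuous_on UNIV f"
  shows "integrable M f"
proof -
  have "compact (f ` msupp M)"
    using compact_continuous_image[OF continuous_on_subset[OF assms] compact_supp] by simp
  then obtain B where B: "\<forall>y\<in>f ` msupp M. norm y \<le> B"
    using compact_imp_bounded bounded_iff by metis
  have "AE z in M. norm (f z) \<le> B" using AE_in_msupp by eventually_elim (use B in auto)
  moreover have "f \<in> borel_measurable M"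
    using measurable_cong_sets[OF sets_M refl] borel_measurable_continuous_onI assms by blast
  ultimately show ?thesis by (rule integrable_const_bound)
qed

lemma integrable_poly_ip: "integrable M (\<lambda>z. poly p z * cnj (poly q z))"
  by (rule integrable_continuous) (intro continuous_intros)

lemma integrable_poly_sq: "integrable M (\<lambda>z. (cmod (poly p z))\<^sup>2)"
  by (rule integrable_continuous) (intro continuous_intros)

definition sqnorm :: "complex poly \<Rightarrow> real" where
  "sqnorm p = integral\<^sup>L M (\<lambda>z. (cmod (poly p z))\<^sup>2)"

lemma poly_L2norm_sqnorm: "poly_L2norm M p = sqrt (sqnorm p)"
  unfolding poly_L2norm_def sqnorm_def ..

lemma sqnorm_nonneg: "sqnorm p \<ge> 0"
  unfolding sqnorm_def by simp

lemma ip_add: "poly_ip M (p + q) r = poly_ip M p r + poly_ip M q r"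
  unfolding poly_ip_def
  by (simp add: distrib_right Bochner_Integration.integral_add[OF integrable_poly_ip integrable_poly_ip])

lemma ip_smult: "poly_ip M (smult a p) q = a * poly_ip M p q"
  unfolding poly_ip_def by (simp add: mult.assoc)

lemma ip_cnj: "poly_ip M q p = cnj (poly_ip M p q)"
proof -
  have "(\<lambda>z. poly q z * cnj (poly p z)) = (\<lambda>z. cnj (poly p z * cnj (poly q z)))"
    by (auto simp: mult.commute)
  then show ?thesis unfolding poly_ip_def by (simp only: Bochner_Integration.integral_cnj)
qed

lemma ip_diff: "poly_ip M (p - q) r = poly_ip M p r - poly_ip M q r"
  using ip_add[of p "- q" r] ip_smult[of "- 1" q r] by simp

lemma ip_zero [simp]: "poly_ip M 0 q = 0"
  unfolding poly_ip_def by simp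

lemma ip_sum: "poly_ip M (\<Sum>k\<in>A. f k) q = (\<Sum>k\<in>A. poly_ip M (f k) q)"
  by (induction A rule: infinite_finite_induct) (auto simp: ip_add)

lemma ip_add_right: "poly_ip M r (p + q) = poly_ip M r p + poly_ip M r q"
  by (subst (1 2 3) ip_cnj) (simp add: ip_add)

lemma ip_smult_right: "poly_ip M q (smult a p) = cnj a * poly_ip M q p"
  by (subst (1 2) ip_cnj) (simp add: ip_smult)

lemma ip_sum_right: "poly_ip M q (\<Sum>k\<in>A. f k) = (\<Sum>k\<in>A. poly_ip M q (f k))"
  by (subst ip_cnj) (simp add: ip_sum ip_cnj[of q])

lemma ip_zero_right [simp]: "poly_ip M q 0 = 0"
  unfolding poly_ip_def by simp

lemma ip_self: "poly_ip M p p = complex_of_real (sqnorm p)"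
  unfolding poly_ip_def sqnorm_def
  by (simp add: complex_norm_square[symmetric] del: of_real_power)

text \<open>Definiteness: a polynomial vanishing \<open>\<mu>\<close>-a.e. vanishes on the infinite support, hence is 0.\<close>
lemma sqnorm_eq_0: "sqnorm p = 0 \<longleftrightarrow> p = 0"
proof
  assume "sqnorm p = 0"
  then have "AE z in M. (cmod (poly p z))\<^sup>2 = 0"
    using integral_nonneg_eq_0_iff_AE[OF integrable_poly_sq] unfolding sqnorm_def by simp
  then have AE0: "AE z in M. poly p z = 0" by simp
  show "p = 0"
  proof (rule ccontr)
    assume "p \<noteq> 0"
    then obtain z where z: "z \<in> msupp M" "poly p z \<noteq> 0"
      using poly_roots_finite infinite_supp finite_subset[of "msupp M" "{z. poly p z = 0}"] by blast
    have "open {y. poly p y \<noteq> 0}" by (intro open_Collect_neq continuous_intros)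
    then obtain e where e: "e > 0" "ball z e \<subseteq> {y. poly p y \<noteq> 0}"
      using z(2) open_contains_ball by blast
    have "AE y in M. y \<notin> ball z e" using AE0 by eventually_elim (use e in auto)
    then have "emeasure M {y \<in> space M. y \<in> ball z e} = 0" by (intro emeasure_eq_0_AE) simp
    then have "emeasure M (ball z e) = 0" by (simp add: space_M ball_def)
    then show False using z(1) e(1) not_in_msupp_iff by blast
  qed
qed (simp add: sqnorm_def)

lemma ip_self_nonzero: "p \<noteq> 0 \<Longrightarrow> poly_ip M p p \<noteq> 0"
  using sqnorm_eq_0 by (simp add: ip_self)

fun GS :: "nat \<Rightarrow> complex poly" where
  "GS n = monom 1 n -
     (\<Sum>k<n. smult (poly_ip M (monom 1 n) (GS k) / poly_ip M (GS k) (GS k)) (GS k))"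

declare GS.simps [simp del]

lemma GS_degree_coeff: "degree (GS n) \<le> n \<and> coeff (GS n) n = 1"
proof (induction n rule: less_induct)
  case (less n)
  define c where "c k = poly_ip M (monom 1 n) (GS k) / poly_ip M (GS k) (GS k)" for k
  have GSn: "GS n = monom 1 n - (\<Sum>k<n. smult (c k) (GS k))"
    unfolding c_def by (rule GS.simps)
  have lowGS: "degree (GS k) < n" if "k < n" for k
    using less.IH[OF that] that by linarith
  then have low: "degree (smult (c k) (GS k)) < n" if "k < n" for k
    using that degree_smult_le[of "c k" "GS k"] by fastforce
  have "degree (GS n) \<le> n" unfolding GSn
    by (intro degree_diff_le degree_sum_le)
      (auto simp: degree_monom_le less_imp_le[OF low] less_imp_le[OF lowGS])
  moreover have "coeff (GS n) n = 1"
    using lowGS by (simp add: GSn coeff_sum coeff_eq_0)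
  ultimately show ?case ..
qed

lemma GS_degree [simp]: "degree (GS n) = n"
  using GS_degree_coeff[of n] le_degree[of "GS n" n] by simp

lemma GS_lead_coeff: "lead_coeff (GS n) = 1"
  using GS_degree_coeff[of n] by simp

lemma GS_nonzero: "GS n \<noteq> 0"
  using GS_lead_coeff[of n] by auto

lemma GS_orthogonal_lower: "k < n \<Longrightarrow> poly_ip M (GS n) (GS k) = 0"
proof (induction n arbitrary: k rule: less_induct)
  case (less n)
  define c where "c k = poly_ip M (monom 1 n) (GS k) / poly_ip M (GS k) (GS k)" for k
  have orth: "poly_ip M (GS j) (GS k) = 0" if "j < n" "k < n" "j \<noteq> k" for j k
    using less.IH that ip_cnj[of "GS j" "GS k"] by (cases "k < j") auto
  have "poly_ip M (GS n) (GS k)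
      = poly_ip M (monom 1 n) (GS k) - (\<Sum>j<n. c j * poly_ip M (GS j) (GS k))"
    by (subst GS.simps) (simp add: c_def ip_diff ip_sum ip_smult)
  also have "(\<Sum>j<n. c j * poly_ip M (GS j) (GS k)) = c k * poly_ip M (GS k) (GS k)"
    using less.prems orth by (intro sum.remove[THEN trans]) (auto intro!: sum.neutral)
  also have "c k * poly_ip M (GS k) (GS k) = poly_ip M (monom 1 n) (GS k)"
    unfolding c_def using ip_self_nonzero[OF GS_nonzero] by simp
  finally show ?case by simp
qed

lemma GS_orthogonal: "j \<noteq> k \<Longrightarrow> poly_ip M (GS j) (GS k) = 0"
  using GS_orthogonal_lower ip_cnj[of "GS j" "GS k"] by (cases "k < j") auto

text \<open>Orthogonality to \<open>GS 0, \<dots>, GS (m - 1)\<close> means orthogonality to all polynomials of degree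
  below \<open>m\<close>, since these form a triangular basis.\<close>
lemma orthogonal_to_lower_degree:
  assumes "\<forall>k<m. poly_ip M p (GS k) = 0" "degree q < m"
  shows "poly_ip M p q = 0"
  using assms
proof (induction m arbitrary: q)
  case (Suc m)
  define q' where "q' = q - smult (coeff q m) (GS m)"
  have "degree q' \<le> m" unfolding q'_def using Suc.prems(2)
    by (intro degree_diff_le) (auto intro: order_trans[OF degree_smult_le])
  moreover have "coeff q' m = 0" unfolding q'_def using GS_degree_coeff[of m] by simp
  ultimately have "q' = 0 \<or> degree q' < m"
    using leading_coeff_neq_0[of q'] le_neq_implies_less by fastforce
  then have "poly_ip M p q' = 0" using Suc by auto
  moreover have "q = q' + smult (coeff q m) (GS m)" unfolding q'_def by simp
  then have "poly_ip M p q = poly_ip M p q' + cnj (coeff q m) * poly_ip M p (GS m)"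
    by (metis ip_add_right ip_smult_right)
  ultimately show ?case using Suc.prems(1) by simp
qed simp

lemma monic_OP_eq_GS: "monic_OP M n = GS n"
  unfolding monic_OP_def
proof (rule the_equality)
  show "degree (GS n) = n \<and> lead_coeff (GS n) = 1 \<and> (\<forall>q. degree q < n \<longrightarrow> poly_ip M (GS n) q = 0)"
    using GS_lead_coeff GS_orthogonal_lower
    by (auto intro: orthogonal_to_lower_degree[of n])
next
  fix p assume p: "degree p = n \<and> lead_coeff p = 1 \<and> (\<forall>q. degree q < n \<longrightarrow> poly_ip M p q = 0)"
  define r where "r = p - GS n"
  have "degree r \<le> n" "coeff r n = 0" unfolding r_def using p GS_lead_coeff[of n]
    by (auto intro: degree_diff_le)
  then have "r = 0 \<or> degree r < n"
    using leading_coeff_neq_0[of r] le_neq_implies_less by fastforce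
  moreover have "degree r < n \<Longrightarrow> poly_ip M r r = 0"
    using p GS_orthogonal_lower by (auto simp: r_def ip_diff intro: orthogonal_to_lower_degree[of n])
  ultimately have "r = 0" using ip_self_nonzero by blast
  then show "p = GS n" unfolding r_def by simp
qed

definition ON :: "nat \<Rightarrow> complex poly" where
  "ON n = smult (1 / complex_of_real (sqrt (sqnorm (GS n)))) (GS n)"

lemma GS_norm_pos: "sqrt (sqnorm (GS n)) > 0"
  using sqnorm_nonneg[of "GS n"] sqnorm_eq_0[of "GS n"] GS_nonzero[of n] by simp

lemma orthonormal_OP_eq: "orthonormal_OP M n z = poly (ON n) z"
  unfolding orthonormal_OP_def monic_OP_eq_GS ON_def poly_L2norm_sqnorm by simp

lemma GS_eq_ON: "GS n = smult (complex_of_real (sqrt (sqnorm (GS n)))) (ON n)"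
  unfolding ON_def using GS_norm_pos[of n] by simp

lemma ON_degree [simp]: "degree (ON n) = n"
  unfolding ON_def using GS_norm_pos[of n] by simp

lemma ON_orthonormal: "poly_ip M (ON j) (ON k) = (if j = k then 1 else 0)"
proof (cases "j = k")
  case True
  define s where "s = sqrt (sqnorm (GS k))"
  have "poly_ip M (ON k) (ON k) = cnj (1 / of_real s) * (1 / of_real s * poly_ip M (GS k) (GS k))"
    unfolding ON_def s_def by (simp only: ip_smult ip_smult_right)
  also have "\<dots> = 1"
  proof -
    have "(complex_of_real s)\<^sup>2 = complex_of_real (sqnorm (GS k))"
      unfolding s_def using sqnorm_nonneg[of "GS k"] by (metis of_real_power real_sqrt_pow2)
    then show ?thesis using GS_norm_pos[of k] unfolding s_def
      by (simp add: ip_self power2_eq_square)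
  qed
  finally show ?thesis using True by simp
qed (simp add: ON_def ip_smult ip_smult_right GS_orthogonal)

lemma ON_0: "ON 0 = 1"
proof -
  have "GS 0 = 1" by (subst GS.simps) (simp add: monom_0 one_pCons)
  moreover have "sqnorm 1 = 1" unfolding sqnorm_def by (simp add: prob_space)
  ultimately show ?thesis unfolding ON_def by simp
qed

lemma ON_expansion:
  assumes "degree q \<le> n"
  shows "q = (\<Sum>k\<le>n. smult (poly_ip M q (ON k)) (ON k))"
proof -
  define r where "r = q - (\<Sum>k\<le>n. smult (poly_ip M q (ON k)) (ON k))"
  have "poly_ip M r (ON j) = 0" if "j \<le> n" for j
    using that
    by (simp add: r_def ip_diff ip_sum ip_smult ON_orthonormal if_distrib sum.delta cong: if_cong)
  then have "\<forall>k<Suc n. poly_ip M r (GS k) = 0"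
    by (subst GS_eq_ON) (simp add: ip_smult_right)
  moreover have "degree r < Suc n" unfolding r_def
    using assms by (intro le_imp_less_Suc degree_diff_le degree_sum_le)
      (auto intro: order_trans[OF degree_smult_le])
  ultimately have "poly_ip M r r = 0" by (rule orthogonal_to_lower_degree)
  then have "r = 0" using ip_self_nonzero by blast
  then show ?thesis unfolding r_def by simp
qed

lemma cnj_mult_self: "cnj z * z = complex_of_real ((cmod z)\<^sup>2)"
  by (metis complex_norm_square mult.commute)

lemma parseval:
  assumes "finite A"
  shows "sqnorm (\<Sum>k\<in>A. smult (c k) (ON k)) = (\<Sum>k\<in>A. (cmod (c k))\<^sup>2)"
proof -
  have "complex_of_real (sqnorm (\<Sum>k\<in>A. smult (c k) (ON k)))
      = (\<Sum>k\<in>A. complex_of_real ((cmod (c k))\<^sup>2))"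
    using assms unfolding ip_self[symmetric]
    by (simp add: ip_sum ip_sum_right ip_smult ip_smult_right ON_orthonormal if_distrib
        cnj_mult_self cong: if_cong)
  then show ?thesis unfolding of_real_sum[symmetric] of_real_eq_iff .
qed

definition Kdiag :: "complex \<Rightarrow> nat \<Rightarrow> real" where
  "Kdiag z0 n = (\<Sum>k\<le>n. (cmod (poly (ON k) z0))\<^sup>2)"

lemma Kdiag_ge_1: "Kdiag z0 n \<ge> 1"
  unfolding Kdiag_def using member_le_sum[of 0 "{..n}" "\<lambda>k. (cmod (poly (ON k) z0))\<^sup>2"]
  by (simp add: ON_0)

lemma Kdiag_Suc: "Kdiag z0 (Suc n) = Kdiag z0 n + (cmod (poly (ON (Suc n)) z0))\<^sup>2"
  unfolding Kdiag_def by simp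

text \<open>Extremal property of the kernel: \<open>|p(z\<^sub>0)|\<^sup>2 \<le> \<parallel>p\<parallel>\<^sup>2 K\<^sub>n(z\<^sub>0)\<close> for \<open>deg p \<le> n\<close>
  (expand \<open>p\<close> in the orthonormal basis and apply Cauchy--Schwarz).\<close>
lemma evaluation_bound:
  assumes "degree p \<le> n"
  shows "(cmod (poly p z0))\<^sup>2 \<le> sqnorm p * Kdiag z0 n"
proof -
  define b where "b k = poly_ip M p (ON k)" for k
  have exp: "p = (\<Sum>k\<le>n. smult (b k) (ON k))" unfolding b_def by (rule ON_expansion[OF assms])
  have "cmod (poly p z0) \<le> (\<Sum>k\<le>n. cmod (b k) * cmod (poly (ON k) z0))"
    by (subst exp) (auto simp: poly_sum norm_mult intro: order_trans[OF norm_sum])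
  then have "(cmod (poly p z0))\<^sup>2 \<le> (\<Sum>k\<le>n. cmod (b k) * cmod (poly (ON k) z0))\<^sup>2"
    by (intro power_mono) auto
  also have "\<dots> \<le> (\<Sum>k\<le>n. (cmod (b k))\<^sup>2) * Kdiag z0 n"
    unfolding Kdiag_def by (rule Cauchy_Schwarz_ineq_sum)
  also have "(\<Sum>k\<le>n. (cmod (b k))\<^sup>2) = sqnorm p" by (subst exp) (simp add: parseval)
  finally show ?thesis .
qed

definition kernel_poly :: "complex \<Rightarrow> nat \<Rightarrow> complex poly" where
  "kernel_poly z0 n = (\<Sum>k\<le>n. smult (cnj (poly (ON k) z0)) (ON k))"

lemma kernel_poly_degree: "degree (kernel_poly z0 n) \<le> n"
  unfolding kernel_poly_def
  by (intro degree_sum_le) (auto intro: order_trans[OF degree_smult_le])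

lemma kernel_poly_at: "poly (kernel_poly z0 n) z0 = complex_of_real (Kdiag z0 n)"
  unfolding kernel_poly_def Kdiag_def by (simp add: poly_sum cnj_mult_self)

lemma sqnorm_kernel_poly: "sqnorm (kernel_poly z0 n) = Kdiag z0 n"
  unfolding kernel_poly_def Kdiag_def by (simp add: parseval)

lemma sqnorm_le_on_support:
  assumes "\<forall>z\<in>msupp M. (cmod (poly p z))\<^sup>2 \<le> c * (cmod (poly q z))\<^sup>2"
  shows "sqnorm p \<le> c * sqnorm q"
proof -
  have "sqnorm p \<le> integral\<^sup>L M (\<lambda>z. c * (cmod (poly q z))\<^sup>2)"
    unfolding sqnorm_def
  proof (rule integral_mono_AE)
    show "AE z in M. (cmod (poly p z))\<^sup>2 \<le> c * (cmod (poly q z))\<^sup>2"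
      using AE_in_msupp by eventually_elim (use assms in auto)
  qed (use integrable_poly_sq in auto)
  then show ?thesis unfolding sqnorm_def by simp
qed

text \<open>If some centre \<open>w\<close> sees every support point at least
  \<open>\<surd>(1 + r)\<close> times closer than \<open>z\<^sub>0\<close>, test the extremal property on \<open>(z - w) K\<^sub>n(z, z\<^sub>0)\<close>:
  it has degree \<open>n + 1\<close>, value \<open>(z\<^sub>0 - w) K\<^sub>n(z\<^sub>0)\<close> at \<open>z\<^sub>0\<close> and squared norm at most
  \<open>|z\<^sub>0 - w|\<^sup>2 K\<^sub>n(z\<^sub>0) / (1 + r)\<close>.\<close>
lemma kernel_growth_step:
  assumes r: "r \<ge> 0"
    and closer: "\<forall>z\<in>msupp M. (1 + r) * (cmod (z - w))\<^sup>2 \<le> (cmod (z0 - w))\<^sup>2"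
  shows "(1 + r) * Kdiag z0 n \<le> Kdiag z0 (Suc n)"
proof -
  have "z0 \<noteq> w"
  proof
    assume "z0 = w"
    have "z = w" if "z \<in> msupp M" for z
    proof -
      have "(1 + r) * (cmod (z - w))\<^sup>2 \<le> 0" using closer that \<open>z0 = w\<close> by auto
      then have "(cmod (z - w))\<^sup>2 + r * (cmod (z - w))\<^sup>2 \<le> 0" by (simp add: distrib_right)
      moreover have "r * (cmod (z - w))\<^sup>2 \<ge> 0" using r by simp
      ultimately have "(cmod (z - w))\<^sup>2 \<le> 0" by linarith
      then show ?thesis by simp
    qed
    then have "msupp M \<subseteq> {w}" by blast
    then show False using infinite_supp finite_subset by blast
  qed
  define k where "k = kernel_poly z0 n"
  define Q where "Q = [:- w, 1:] * k"
  define a K K' where "a = (cmod (z0 - w))\<^sup>2" and "K = Kdiag z0 n" and "K' = Kdiag z0 (Suc n)"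
  have poly_Q: "poly Q z = (z - w) * poly k z" for z unfolding Q_def by (simp add: algebra_simps)
  have "degree Q \<le> Suc n"
    using degree_mult_le[of "[:- w, 1:]" k] kernel_poly_degree[of z0 n] unfolding Q_def k_def
    by simp
  then have "(cmod (poly Q z0))\<^sup>2 \<le> sqnorm Q * K'" unfolding K'_def by (rule evaluation_bound)
  then have upper: "a * K\<^sup>2 \<le> sqnorm Q * K'"
    unfolding poly_Q k_def kernel_poly_at a_def K_def by (simp add: norm_mult power_mult_distrib)
  have "\<forall>z\<in>msupp M. (cmod (poly Q z))\<^sup>2 \<le> a / (1 + r) * (cmod (poly k z))\<^sup>2"
  proof
    fix z assume "z \<in> msupp M"
    then have "(cmod (z - w))\<^sup>2 \<le> a / (1 + r)"
      using closer r by (simp add: a_def pos_le_divide_eq mult.commute)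
    then show "(cmod (poly Q z))\<^sup>2 \<le> a / (1 + r) * (cmod (poly k z))\<^sup>2"
      unfolding poly_Q norm_mult power_mult_distrib by (intro mult_right_mono) auto
  qed
  then have "sqnorm Q \<le> a / (1 + r) * sqnorm k" by (rule sqnorm_le_on_support)
  then have lower: "sqnorm Q \<le> a / (1 + r) * K" unfolding k_def K_def sqnorm_kernel_poly .
  have "sqnorm Q * K' \<le> a / (1 + r) * K * K'"
    using lower Kdiag_ge_1[of z0 "Suc n"] unfolding K'_def by (intro mult_right_mono) auto
  with upper have combined: "a * K\<^sup>2 \<le> a / (1 + r) * K * K'" by linarith
  have aK: "a * K > 0" using \<open>z0 \<noteq> w\<close> Kdiag_ge_1[of z0 n] unfolding a_def K_def by simp
  have "(a * K) * ((1 + r) * K) = (1 + r) * (a * K\<^sup>2)" by (simp add: power2_eq_square)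
  also have "\<dots> \<le> (1 + r) * (a / (1 + r) * K * K')"
    using combined r by (intro mult_left_mono) auto
  also have "\<dots> = (a * K) * K'" using r by simp
  finally show ?thesis using aK unfolding K_def K'_def by (simp add: mult_le_cancel_left_pos)
qed

lemma orthonormal_growth:
  assumes r: "r \<ge> 0" and step: "\<And>n. (1 + r) * Kdiag z0 n \<le> Kdiag z0 (Suc n)"
  shows "r * (1 + r) ^ n \<le> (cmod (orthonormal_OP M (Suc n) z0))\<^sup>2"
proof -
  have K: "(1 + r) ^ n \<le> Kdiag z0 n" for n
  proof (induction n)
    case (Suc n)
    have "(1 + r) ^ Suc n \<le> (1 + r) * Kdiag z0 n" using Suc r by (simp add: mult_left_mono)
    also have "\<dots> \<le> Kdiag z0 (Suc n)" by (rule step)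
    finally show ?case .
  qed (simp add: Kdiag_ge_1)
  have "r * (1 + r) ^ n \<le> r * Kdiag z0 n" using K r by (rule mult_left_mono)
  also have "\<dots> \<le> Kdiag z0 (Suc n) - Kdiag z0 n" using step[of n] by (simp add: algebra_simps)
  also have "\<dots> = (cmod (orthonormal_OP M (Suc n) z0))\<^sup>2" by (simp add: Kdiag_Suc orthonormal_OP_eq)
  finally show ?thesis .
qed

text \<open>The Chebyshev radius \<open>D\<close> of the convex hull is positive, as the support has two points.\<close>
lemma hull_radius_pos: "(INF w. SUP z\<in>convex hull msupp M. cmod (z - w)) > 0"
proof -
  obtain a where a: "a \<in> msupp M" using infinite_supp by (metis finite.emptyI ex_in_conv)
  obtain b where "b \<in> msupp M - {a}"
    using infinite_remove[OF infinite_supp, of a] by (metis finite.emptyI ex_in_conv)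
  with a show ?thesis
    using compact_imp_bounded[OF compact_convex_hull[OF compact_supp]] hull_subset[of "msupp M"]
    by (intro chebyshev_radius_pos[of _ a b]) auto
qed

text \<open>Growth of the kernel at a point outside the convex hull, with the ratio \<open>1 + (d/D)\<^sup>2\<close>:
  for every \<open>R > D\<close> a shifted centre gives the ratio \<open>1 + (d/R)\<^sup>2\<close>; then let \<open>R \<rightarrow> D\<close>.\<close>
lemma kernel_growth_outside_hull:
  assumes z0: "z0 \<notin> convex hull msupp M"
  defines "H \<equiv> convex hull msupp M"
  defines "D \<equiv> (INF w. SUP z\<in>H. cmod (z - w))"
  shows "(1 + (infdist z0 H / D)\<^sup>2) * Kdiag z0 n \<le> Kdiag z0 (Suc n)"
proof -
  have D: "D > 0" unfolding D_def H_def by (rule hull_radius_pos)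
  have beyond: "(1 + (infdist z0 H / R)\<^sup>2) * Kdiag z0 n \<le> Kdiag z0 (Suc n)" if R: "D < R" for R
  proof -
    obtain w where "\<forall>z\<in>H. (1 + (infdist z0 H / R)\<^sup>2) * (cmod (z - w))\<^sup>2 \<le> (cmod (z0 - w))\<^sup>2"
      using exists_shifted_centre[of H z0 R] R z0 compact_convex_hull[OF compact_supp]
      unfolding H_def D_def by auto
    then show ?thesis using hull_subset[of "msupp M"] unfolding H_def
      by (intro kernel_growth_step) auto
  qed
  have "eventually (\<lambda>R. (1 + (infdist z0 H / R)\<^sup>2) * Kdiag z0 n \<le> Kdiag z0 (Suc n)) (at_right D)"
    using eventually_at_right_less[of D] by eventually_elim (rule beyond)
  moreover have "((\<lambda>R. (1 + (infdist z0 H / R)\<^sup>2) * Kdiag z0 n) \<longlongrightarrow>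
      (1 + (infdist z0 H / D)\<^sup>2) * Kdiag z0 n) (at_right D)"
    using D by (intro tendsto_intros) auto
  ultimately show ?thesis by (intro tendsto_upperbound[of _ _ "at_right D"]) auto
qed

end

theorem proposition3p3:
  fixes M :: "complex measure" and z0 :: complex
  assumes "prob_space M"
    and "sets M = sets borel"
    and "compact (msupp M)"
    and "infinite (msupp M)"
    and "z0 \<notin> convex hull (msupp M)"
  defines "H \<equiv> convex hull (msupp M)"
  defines "D \<equiv> (INF w. SUP z\<in>H. cmod (z - w))"
  defines "d \<equiv> infdist z0 H"
  shows "(\<forall>n\<ge>1. (cmod (orthonormal_OP M n z0))\<^sup>2 \<ge> (d / D)\<^sup>2 * (1 + (d / D)\<^sup>2) ^ (n - 1))
       \<and> (\<forall>n. orthonormal_OP M n z0 \<noteq> 0)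
       \<and> liminf (\<lambda>n. ereal (cmod (orthonormal_OP M n z0) powr (1 / real n)))
            \<ge> ereal (sqrt (1 + (d / D)\<^sup>2))
       \<and> sqrt (1 + (d / D)\<^sup>2) > 1"
proof -
  interpret compact_support_measure M by (rule compact_support_measure.intro[OF assms(1-4)])
  have "H \<noteq> {}" using assms(4) unfolding H_def by auto
  then have d: "d > 0" unfolding d_def using assms(5) compact_convex_hull[OF assms(3)]
    by (intro infdist_pos_not_in_closed) (auto simp: H_def compact_imp_closed)
  have D: "D > 0" unfolding D_def H_def by (rule hull_radius_pos)
  define r where "r = (d / D)\<^sup>2"
  have r: "r > 0" unfolding r_def using d D by simp
  have "(1 + r) * Kdiag z0 n \<le> Kdiag z0 (Suc n)" for n
    unfolding r_def d_def D_def H_def using assms(5) by (rule kernel_growth_outside_hull)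
  then have bound: "r * (1 + r) ^ (n - 1) \<le> (cmod (orthonormal_OP M n z0))\<^sup>2" if "n \<ge> 1" for n
    using orthonormal_growth[of r z0 "n - 1"] r that by simp
  have nonzero: "orthonormal_OP M n z0 \<noteq> 0" for n
  proof (cases n)
    case (Suc m)
    have "0 < r * (1 + r) ^ (n - 1)" using r by simp
    also have "\<dots> \<le> (cmod (orthonormal_OP M n z0))\<^sup>2" using bound[of n] Suc by simp
    finally have "0 < (cmod (orthonormal_OP M n z0))\<^sup>2" .
    then show ?thesis by auto
  qed (simp add: orthonormal_OP_eq ON_0)
  have "liminf (\<lambda>n. ereal (cmod (orthonormal_OP M n z0) powr (1 / real n))) \<ge> ereal (sqrt (1 + r))"
    using r bound by (intro liminf_root_ge) auto
  then show ?thesis using bound nonzero r unfolding r_def by auto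
qed

end
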